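(* Let $\mathcal{C}$ be a Karoubian triangulated category endowed with a weight structure $w$, let $M\in\mathrm{Obj}\,\mathcal{C}$ and $m\in\mathbb{Z}$. Fix an $m$-weight decomposition $w_{\le m}M\xrightarrow{c} M\to w_{\ge m+1}M\to (w_{\le m}M)[1]$ of $M$, and suppose that there is a morphism of this distinguished triangle to itself of the form $(h,\mathrm{id}_M,j)$ (i.e., $h\in\mathcal{C}(w_{\le m}M,w_{\le m}M)$, $j\in \mathcal{C}(w_{\ge m+1}M,w_{\ge m+1}M)$, the squares commute) such that $h$ is idempotent. Let $w_{\le m}M\cong M_1\bigoplus M_0$ be the decomposition corresponding to $h$ (so that $h$ is the projection of $w_{\le m}M$ onto the summand $M_1$). Then $M_0\in\mathcal{C}_{w=m}$, and the triangle $w_{\le m}M\to M\to w_{\ge m+1}M\to (w_{\le m}M)[1]$ is isomorphic to the direct sum of a certain $m$-weight decomposition $M_1\to M\to M_2\to M_1[1]$ of $M$ and of the distinguished triangle $M_0\to 0\to M_0[1]\xrightarrow{\mathrm{id}} M_0[1]$.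
   Context: A weight structure $w$ on a triangulated category $\mathcal{C}$ (homological convention) is a pair of classes of objects $\mathcal{C}_{w\le 0},\mathcal{C}_{w\ge 0}$ such that: (i) both are closed under retracts in $\mathcal{C}$; (ii) $\mathcal{C}_{w\le 0}\subset\mathcal{C}_{w\le 0}[1]$ and $\mathcal{C}_{w\ge 0}[1]\subset \mathcal{C}_{w\ge 0}$; (iii) $\mathcal{C}(X,Y)=0$ for all $X\in\mathcal{C}_{w\le 0}$, $Y\in\mathcal{C}_{w\ge 0}[1]$; (iv) every object $M$ fits into a distinguished triangle $X\to M\to Y\to X[1]$ with $X\in\mathcal{C}_{w\le 0}$, $Y\in\mathcal{C}_{w\ge 0}[1]$. For $i\in\mathbb{Z}$ put $\mathcal{C}_{w\le i}=\mathcal{C}_{w\le 0}[i]$, $\mathcal{C}_{w\ge i}=\mathcal{C}_{w\ge 0}[i]$, $\mathcal{C}_{w=i}=\mathcal{C}_{w\le i}\cap\mathcal{C}_{w\ge i}$. An $m$-weight decomposition of $M$ is a distinguished triangle $w_{\le m}M\to M\to w_{\ge m+1}M\to (w_{\le m}M)[1]$ with $w_{\le m}M\in \mathcal{C}_{w\le m}$ and $w_{\ge m+1}M\in\mathcal{C}_{w\ge m+1}$ (these exist for every $M$ and $m$ but are not unique). A category is Karoubian if every idempotent endomorphism splits. *)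

theory Defs
  imports Main
begin

text \<open>Hom X Y is the set of
morphisms X -> Y; cmp g f is the composite "g after f".\<close>

record ('o, 'm) tricat =
  Obj  :: "'o set"
  Hom  :: "'o \<Rightarrow> 'o \<Rightarrow> 'm set"
  cmp  :: "'m \<Rightarrow> 'm \<Rightarrow> 'm"
  idm  :: "'o \<Rightarrow> 'm"
  add  :: "'m \<Rightarrow> 'm \<Rightarrow> 'm"
  neg  :: "'m \<Rightarrow> 'm"
  zer  :: "'o \<Rightarrow> 'o \<Rightarrow> 'm"
  shO  :: "'o \<Rightarrow> 'o"
  shM  :: "'m \<Rightarrow> 'm"
  dist :: "('o \<times> 'o \<times> 'o \<times> 'm \<times> 'm \<times> 'm) set"

definition category :: "('o, 'm, 'x) tricat_scheme \<Rightarrow> bool" where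
  "category C \<equiv>
     (\<forall>X Y f. f \<in> Hom C X Y \<longrightarrow> X \<in> Obj C \<and> Y \<in> Obj C) \<and>
     (\<forall>X \<in> Obj C. idm C X \<in> Hom C X X) \<and>
     (\<forall>X Y Z f g. f \<in> Hom C X Y \<longrightarrow> g \<in> Hom C Y Z \<longrightarrow> cmp C g f \<in> Hom C X Z) \<and>
     (\<forall>X Y f. f \<in> Hom C X Y \<longrightarrow> cmp C (idm C Y) f = f \<and> cmp C f (idm C X) = f) \<and>
     (\<forall>W X Y Z f g h. f \<in> Hom C W X \<longrightarrow> g \<in> Hom C X Y \<longrightarrow> h \<in> Hom C Y Z \<longrightarrow>
         cmp C h (cmp C g f) = cmp C (cmp C h g) f)"

definition preadditive :: "('o, 'm, 'x) tricat_scheme \<Rightarrow> bool" where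
  "preadditive C \<equiv>
     (\<forall>X \<in> Obj C. \<forall>Y \<in> Obj C.
        zer C X Y \<in> Hom C X Y \<and>
        (\<forall>f \<in> Hom C X Y. \<forall>g \<in> Hom C X Y. add C f g \<in> Hom C X Y) \<and>
        (\<forall>f \<in> Hom C X Y. neg C f \<in> Hom C X Y) \<and>
        (\<forall>f \<in> Hom C X Y. \<forall>g \<in> Hom C X Y. \<forall>h \<in> Hom C X Y.
            add C (add C f g) h = add C f (add C g h)) \<and>
        (\<forall>f \<in> Hom C X Y. \<forall>g \<in> Hom C X Y. add C f g = add C g f) \<and>
        (\<forall>f \<in> Hom C X Y. add C (zer C X Y) f = f) \<and>
        (\<forall>f \<in> Hom C X Y. add C (neg C f) f = zer C X Y)) \<and>
     (\<forall>X Y Z f g g'. f \<in> Hom C X Y \<longrightarrow> g \<in> Hom C Y Z \<longrightarrow> g' \<in> Hom C Y Z \<longrightarrow>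
         cmp C (add C g g') f = add C (cmp C g f) (cmp C g' f)) \<and>
     (\<forall>X Y Z f f' g. f \<in> Hom C X Y \<longrightarrow> f' \<in> Hom C X Y \<longrightarrow> g \<in> Hom C Y Z \<longrightarrow>
         cmp C g (add C f f') = add C (cmp C g f) (cmp C g f'))"

definition is_zero_obj :: "('o, 'm, 'x) tricat_scheme \<Rightarrow> 'o \<Rightarrow> bool" where
  "is_zero_obj C Z \<equiv> Z \<in> Obj C \<and>
     (\<forall>X \<in> Obj C. (\<forall>f \<in> Hom C Z X. f = zer C Z X) \<and> (\<forall>f \<in> Hom C X Z. f = zer C X Z))"

definition biproduct :: "('o, 'm, 'x) tricat_scheme \<Rightarrow> 'o \<Rightarrow> 'o \<Rightarrow> 'o \<Rightarrow>
    'm \<Rightarrow> 'm \<Rightarrow> 'm \<Rightarrow> 'm \<Rightarrow> bool" where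
  "biproduct C S X Y i1 p1 i2 p2 \<equiv>
     S \<in> Obj C \<and> X \<in> Obj C \<and> Y \<in> Obj C \<and>
     i1 \<in> Hom C X S \<and> p1 \<in> Hom C S X \<and> i2 \<in> Hom C Y S \<and> p2 \<in> Hom C S Y \<and>
     cmp C p1 i1 = idm C X \<and> cmp C p2 i2 = idm C Y \<and>
     cmp C p2 i1 = zer C X Y \<and> cmp C p1 i2 = zer C Y X \<and>
     add C (cmp C i1 p1) (cmp C i2 p2) = idm C S"

definition additive :: "('o, 'm, 'x) tricat_scheme \<Rightarrow> bool" where
  "additive C \<equiv> category C \<and> preadditive C \<and> (\<exists>Z. is_zero_obj C Z) \<and>
     (\<forall>X \<in> Obj C. \<forall>Y \<in> Obj C. \<exists>S i1 p1 i2 p2. biproduct C S X Y i1 p1 i2 p2)"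

definition iso :: "('o, 'm, 'x) tricat_scheme \<Rightarrow> 'o \<Rightarrow> 'o \<Rightarrow> 'm \<Rightarrow> bool" where
  "iso C X Y f \<equiv> f \<in> Hom C X Y \<and>
     (\<exists>g \<in> Hom C Y X. cmp C g f = idm C X \<and> cmp C f g = idm C Y)"

definition isomorphic :: "('o, 'm, 'x) tricat_scheme \<Rightarrow> 'o \<Rightarrow> 'o \<Rightarrow> bool" where
  "isomorphic C X Y \<equiv> (\<exists>f. iso C X Y f)"

definition shift_autoequivalence :: "('o, 'm, 'x) tricat_scheme \<Rightarrow> bool" where
  "shift_autoequivalence C \<equiv>
     (\<forall>X \<in> Obj C. shO C X \<in> Obj C) \<and>
     (\<forall>X Y f. f \<in> Hom C X Y \<longrightarrow> shM C f \<in> Hom C (shO C X) (shO C Y)) \<and>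
     (\<forall>X \<in> Obj C. shM C (idm C X) = idm C (shO C X)) \<and>
     (\<forall>X Y Z f g. f \<in> Hom C X Y \<longrightarrow> g \<in> Hom C Y Z \<longrightarrow>
         shM C (cmp C g f) = cmp C (shM C g) (shM C f)) \<and>
     (\<forall>X Y f f'. f \<in> Hom C X Y \<longrightarrow> f' \<in> Hom C X Y \<longrightarrow>
         shM C (add C f f') = add C (shM C f) (shM C f')) \<and>
     (\<forall>X \<in> Obj C. \<forall>Y \<in> Obj C. bij_betw (shM C) (Hom C X Y) (Hom C (shO C X) (shO C Y))) \<and>
     (\<forall>Y \<in> Obj C. \<exists>X \<in> Obj C. isomorphic C (shO C X) Y)"

type_synonym ('o, 'm) triangle = "'o \<times> 'o \<times> 'o \<times> 'm \<times> 'm \<times> 'm"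

definition is_triangle :: "('o, 'm, 'x) tricat_scheme \<Rightarrow> ('o, 'm) triangle \<Rightarrow> bool" where
  "is_triangle C T \<equiv> (case T of (X, Y, Z, f, g, h) \<Rightarrow>
     f \<in> Hom C X Y \<and> g \<in> Hom C Y Z \<and> h \<in> Hom C Z (shO C X))"

definition tri_morph :: "('o, 'm, 'x) tricat_scheme \<Rightarrow> ('o, 'm) triangle \<Rightarrow> ('o, 'm) triangle \<Rightarrow>
    'm \<Rightarrow> 'm \<Rightarrow> 'm \<Rightarrow> bool" where
  "tri_morph C T T' a b c \<equiv> (case T of (X, Y, Z, f, g, h) \<Rightarrow> case T' of (X', Y', Z', f', g', h') \<Rightarrow>
     a \<in> Hom C X X' \<and> b \<in> Hom C Y Y' \<and> c \<in> Hom C Z Z' \<and>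
     cmp C b f = cmp C f' a \<and> cmp C c g = cmp C g' b \<and> cmp C (shM C a) h = cmp C h' c)"

definition tri_iso :: "('o, 'm, 'x) tricat_scheme \<Rightarrow> ('o, 'm) triangle \<Rightarrow> ('o, 'm) triangle \<Rightarrow>
    'm \<Rightarrow> 'm \<Rightarrow> 'm \<Rightarrow> bool" where
  "tri_iso C T T' a b c \<equiv> tri_morph C T T' a b c \<and> (case T of (X, Y, Z, f, g, h) \<Rightarrow>
     case T' of (X', Y', Z', f', g', h') \<Rightarrow> iso C X X' a \<and> iso C Y Y' b \<and> iso C Z Z' c)"

definition triangulated :: "('o, 'm, 'x) tricat_scheme \<Rightarrow> bool" where
  "triangulated C \<equiv> additive C \<and> shift_autoequivalence C \<and>
     (\<forall>T \<in> dist C. is_triangle C T) \<and>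
     \<comment> \<open>TR1: closure under isomorphism, identity triangles, existence of cones\<close>
     (\<forall>T T' a b c. T \<in> dist C \<longrightarrow> is_triangle C T' \<longrightarrow> tri_iso C T T' a b c \<longrightarrow> T' \<in> dist C) \<and>
     (\<forall>X \<in> Obj C. \<forall>Z. is_zero_obj C Z \<longrightarrow>
        (X, X, Z, idm C X, zer C X Z, zer C Z (shO C X)) \<in> dist C) \<and>
     (\<forall>X Y f. f \<in> Hom C X Y \<longrightarrow> (\<exists>Z g h. (X, Y, Z, f, g, h) \<in> dist C)) \<and>
     \<comment> \<open>TR2: rotation\<close>
     (\<forall>X Y Z f g h. f \<in> Hom C X Y \<longrightarrow>
        ((X, Y, Z, f, g, h) \<in> dist C \<longleftrightarrow> (Y, Z, shO C X, g, h, neg C (shM C f)) \<in> dist C)) \<and>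
     \<comment> \<open>TR3: completion of morphisms of triangles\<close>
     (\<forall>X Y Z f g h X' Y' Z' f' g' h' a b.
        (X, Y, Z, f, g, h) \<in> dist C \<longrightarrow> (X', Y', Z', f', g', h') \<in> dist C \<longrightarrow>
        a \<in> Hom C X X' \<longrightarrow> b \<in> Hom C Y Y' \<longrightarrow> cmp C b f = cmp C f' a \<longrightarrow>
        (\<exists>c \<in> Hom C Z Z'. cmp C c g = cmp C g' b \<and> cmp C (shM C a) h = cmp C h' c)) \<and>
     \<comment> \<open>TR4: octahedral axiom\<close>
     (\<forall>X Y Z u v Z' x x' X' y y' Y' z z'.
        (X, Y, Z', u, x, x') \<in> dist C \<longrightarrow>
        (Y, Z, X', v, y, y') \<in> dist C \<longrightarrow>
        (X, Z, Y', cmp C v u, z, z') \<in> dist C \<longrightarrow>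
        (\<exists>a b. (Z', Y', X', a, b, cmp C (shM C x) y') \<in> dist C \<and>
           cmp C a x = cmp C z v \<and> cmp C z' a = x' \<and>
           cmp C b z = y \<and> cmp C y' b = cmp C (shM C u) z'))"

definition karoubian :: "('o, 'm, 'x) tricat_scheme \<Rightarrow> bool" where
  "karoubian C \<equiv> (\<forall>X \<in> Obj C. \<forall>e \<in> Hom C X X. cmp C e e = e \<longrightarrow>
     (\<exists>Y r s. r \<in> Hom C X Y \<and> s \<in> Hom C Y X \<and> cmp C r s = idm C Y \<and> cmp C s r = e))"

definition retract :: "('o, 'm, 'x) tricat_scheme \<Rightarrow> 'o \<Rightarrow> 'o \<Rightarrow> bool" where
  "retract C Y X \<equiv> (\<exists>s \<in> Hom C Y X. \<exists>r \<in> Hom C X Y. cmp C r s = idm C Y)"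

text \<open>S[i] for an integer i: objects X with X \<cong> Y[i] for some Y in S, expressed
via nonnegative powers of the shift (X[k] \<cong> Y[l] with l - k = i), since [1] is
only an autoequivalence.\<close>
definition wshift :: "('o, 'm, 'x) tricat_scheme \<Rightarrow> 'o set \<Rightarrow> int \<Rightarrow> 'o set" where
  "wshift C S i = {X \<in> Obj C. \<exists>Y \<in> S. \<exists>k l :: nat. int l - int k = i \<and>
      isomorphic C ((shO C ^^ k) X) ((shO C ^^ l) Y)}"

text \<open>Weight structure (homological convention); Le = C_{w<=0}, Ge = C_{w>=0}.\<close>
definition weight_structure :: "('o, 'm, 'x) tricat_scheme \<Rightarrow> 'o set \<Rightarrow> 'o set \<Rightarrow> bool" where
  "weight_structure C Le Ge \<equiv> Le \<subseteq> Obj C \<and> Ge \<subseteq> Obj C \<and>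
     (\<forall>X \<in> Le. \<forall>Y \<in> Obj C. retract C Y X \<longrightarrow> Y \<in> Le) \<and>
     (\<forall>X \<in> Ge. \<forall>Y \<in> Obj C. retract C Y X \<longrightarrow> Y \<in> Ge) \<and>
     Le \<subseteq> wshift C Le 1 \<and> wshift C Ge 1 \<subseteq> Ge \<and>
     (\<forall>X \<in> Le. \<forall>Y \<in> wshift C Ge 1. \<forall>f \<in> Hom C X Y. f = zer C X Y) \<and>
     (\<forall>M \<in> Obj C. \<exists>X Y f g h. (X, M, Y, f, g, h) \<in> dist C \<and> X \<in> Le \<and> Y \<in> wshift C Ge 1)"

definition w_le :: "('o, 'm, 'x) tricat_scheme \<Rightarrow> 'o set \<Rightarrow> int \<Rightarrow> 'o set" where
  "w_le C Le i = wshift C Le i"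

definition w_ge :: "('o, 'm, 'x) tricat_scheme \<Rightarrow> 'o set \<Rightarrow> int \<Rightarrow> 'o set" where
  "w_ge C Ge i = wshift C Ge i"

definition w_eq :: "('o, 'm, 'x) tricat_scheme \<Rightarrow> 'o set \<Rightarrow> 'o set \<Rightarrow> int \<Rightarrow> 'o set" where
  "w_eq C Le Ge i = w_le C Le i \<inter> w_ge C Ge i"

end

theory Submission
  imports Defs
begin

text \<open>Since \<open>c \<circ> h = c\<close>, the morphism \<open>c\<close> vanishes on the summand \<open>M0\<close> and factors as
  \<open>c1 \<circ> p1\<close> with \<open>c1 = c \<circ> i1\<close>. Comparing the given triangle with a cone \<open>M1 \<rightarrow> M \<rightarrow> M2\<close>
  of \<open>c1\<close> in both directions (TR3) makes \<open>M2\<close> a retract of \<open>B\<close>, because an endomorphism of a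
  distinguished triangle that is the identity on two vertices is invertible. Since \<open>c \<circ> i0 = 0\<close>,
  the map \<open>i0[1]\<close> lifts along the third morphism \<open>k\<close> to a section \<open>M0[1] \<rightarrow> B\<close> with
  retraction \<open>p0[1] \<circ> k\<close>. The two retractions split \<open>B\<close> as \<open>M2 \<oplus> M0[1]\<close>, and in these
  coordinates the triangle is the sum of the cone of \<open>c1\<close> and \<open>M0 \<rightarrow> 0 \<rightarrow> M0[1]\<close>. In a
  Karoubian category the shifted weight classes are closed under retracts, so \<open>M0\<close> (a retract of
  \<open>A\<close>) has weights \<open>\<le> m\<close> and \<open>M0[1]\<close> (a retract of \<open>B\<close>) has weights \<open>\<ge> m + 1\<close>.\<close>

section \<open>Additive categories with shift\<close>

locale triangulated_category =
  fixes C :: "('o, 'm) tricat"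
  assumes triangulated: "triangulated C"
begin

lemma additive: "additive C"
  using triangulated unfolding triangulated_def by (elim conjE) blast

lemma category: "category C"
  using additive unfolding additive_def by blast

lemma preadditive: "preadditive C"
  using additive unfolding additive_def by blast

lemma shift_autoequivalence: "shift_autoequivalence C"
  using triangulated unfolding triangulated_def by (elim conjE) blast

lemma zero_obj_exists: "\<exists>Z. is_zero_obj C Z"
  using additive unfolding additive_def by blast

lemma hom_objL: "f \<in> Hom C X Y \<Longrightarrow> X \<in> Obj C"
  and hom_objR: "f \<in> Hom C X Y \<Longrightarrow> Y \<in> Obj C"
  using category unfolding category_def by blast+

lemma id_hom: "X \<in> Obj C \<Longrightarrow> idm C X \<in> Hom C X X"
  using category unfolding category_def by blast

lemma cmp_hom: "f \<in> Hom C X Y \<Longrightarrow> g \<in> Hom C Y Z \<Longrightarrow> cmp C g f \<in> Hom C X Z"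
  using category unfolding category_def by blast

lemma id_left: "f \<in> Hom C X Y \<Longrightarrow> cmp C (idm C Y) f = f"
  and id_right: "f \<in> Hom C X Y \<Longrightarrow> cmp C f (idm C X) = f"
  using category unfolding category_def by blast+

lemma cmp_assoc:
  "f \<in> Hom C W X \<Longrightarrow> g \<in> Hom C X Y \<Longrightarrow> h \<in> Hom C Y Z \<Longrightarrow>
   cmp C h (cmp C g f) = cmp C (cmp C h g) f"
  using category unfolding category_def by blast

lemma preadditive_hom_groups:
  assumes "X \<in> Obj C" "Y \<in> Obj C"
  shows "zer C X Y \<in> Hom C X Y \<and>
    (\<forall>f \<in> Hom C X Y. \<forall>g \<in> Hom C X Y. add C f g \<in> Hom C X Y) \<and>
    (\<forall>f \<in> Hom C X Y. neg C f \<in> Hom C X Y) \<and>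
    (\<forall>f \<in> Hom C X Y. \<forall>g \<in> Hom C X Y. \<forall>h \<in> Hom C X Y.
        add C (add C f g) h = add C f (add C g h)) \<and>
    (\<forall>f \<in> Hom C X Y. \<forall>g \<in> Hom C X Y. add C f g = add C g f) \<and>
    (\<forall>f \<in> Hom C X Y. add C (zer C X Y) f = f) \<and>
    (\<forall>f \<in> Hom C X Y. add C (neg C f) f = zer C X Y)"
  using preadditive assms unfolding preadditive_def by (elim conjE) (drule bspec, assumption)+

lemma zer_hom: "X \<in> Obj C \<Longrightarrow> Y \<in> Obj C \<Longrightarrow> zer C X Y \<in> Hom C X Y"
  using preadditive_hom_groups by blast

lemma add_hom: "f \<in> Hom C X Y \<Longrightarrow> g \<in> Hom C X Y \<Longrightarrow> add C f g \<in> Hom C X Y"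
  using preadditive_hom_groups[OF hom_objL hom_objR] by blast

lemma neg_hom: "f \<in> Hom C X Y \<Longrightarrow> neg C f \<in> Hom C X Y"
  using preadditive_hom_groups[OF hom_objL hom_objR] by blast

lemma add_assoc:
  "f \<in> Hom C X Y \<Longrightarrow> g \<in> Hom C X Y \<Longrightarrow> h \<in> Hom C X Y \<Longrightarrow>
   add C (add C f g) h = add C f (add C g h)"
  using preadditive_hom_groups[OF hom_objL hom_objR] by blast

lemma add_comm: "f \<in> Hom C X Y \<Longrightarrow> g \<in> Hom C X Y \<Longrightarrow> add C f g = add C g f"
  using preadditive_hom_groups[OF hom_objL hom_objR] by blast

lemma add_zero_left: "f \<in> Hom C X Y \<Longrightarrow> add C (zer C X Y) f = f"
  using preadditive_hom_groups[OF hom_objL hom_objR] by blast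

lemma add_neg_left: "f \<in> Hom C X Y \<Longrightarrow> add C (neg C f) f = zer C X Y"
  using preadditive_hom_groups[OF hom_objL hom_objR] by blast

lemma cmp_add_left:
  "f \<in> Hom C X Y \<Longrightarrow> g \<in> Hom C Y Z \<Longrightarrow> g' \<in> Hom C Y Z \<Longrightarrow>
   cmp C (add C g g') f = add C (cmp C g f) (cmp C g' f)"
  using preadditive unfolding preadditive_def by (elim conjE) simp

lemma cmp_add_right:
  "f \<in> Hom C X Y \<Longrightarrow> f' \<in> Hom C X Y \<Longrightarrow> g \<in> Hom C Y Z \<Longrightarrow>
   cmp C g (add C f f') = add C (cmp C g f) (cmp C g f')"
  using preadditive unfolding preadditive_def by (elim conjE) simp

lemma add_zero_right: "f \<in> Hom C X Y \<Longrightarrow> add C f (zer C X Y) = f"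
  by (metis add_comm add_zero_left hom_objL hom_objR zer_hom)

lemma add_neg_right: "f \<in> Hom C X Y \<Longrightarrow> add C f (neg C f) = zer C X Y"
  by (metis add_comm add_neg_left neg_hom)

lemma neg_unique:
  assumes a: "a \<in> Hom C X Y" and b: "b \<in> Hom C X Y" and ab: "add C a b = zer C X Y"
  shows "a = neg C b"
proof -
  have "a = add C a (add C b (neg C b))"
    using a b by (simp add: add_neg_right add_zero_right)
  also have "\<dots> = add C (add C a b) (neg C b)"
    using add_assoc[OF a b neg_hom[OF b]] by simp
  also have "\<dots> = neg C b"
    using ab b by (simp add: add_zero_left neg_hom)
  finally show ?thesis .
qed

lemma add_self_eq_zero:
  assumes x: "x \<in> Hom C X Y" and xx: "add C x x = x"
  shows "x = zer C X Y"
proof -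
  have "zer C X Y = add C (add C x x) (neg C x)"
    using x xx by (simp add: add_neg_right)
  also have "\<dots> = x"
    using add_assoc[OF x x neg_hom[OF x]] x by (simp add: add_neg_right add_zero_right)
  finally show ?thesis by simp
qed

lemma cmp_zero_left:
  assumes f: "f \<in> Hom C X Y" and Z: "Z \<in> Obj C"
  shows "cmp C (zer C Y Z) f = zer C X Z"
proof (rule add_self_eq_zero)
  have z: "zer C Y Z \<in> Hom C Y Z" using zer_hom[OF hom_objR[OF f] Z] .
  show "cmp C (zer C Y Z) f \<in> Hom C X Z" using cmp_hom[OF f z] .
  show "add C (cmp C (zer C Y Z) f) (cmp C (zer C Y Z) f) = cmp C (zer C Y Z) f"
    using cmp_add_left[OF f z z] add_zero_left[OF z] by simp
qed

lemma cmp_zero_right: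
  assumes g: "g \<in> Hom C Y Z" and X: "X \<in> Obj C"
  shows "cmp C g (zer C X Y) = zer C X Z"
proof (rule add_self_eq_zero)
  have z: "zer C X Y \<in> Hom C X Y" using zer_hom[OF X hom_objL[OF g]] .
  show "cmp C g (zer C X Y) \<in> Hom C X Z" using cmp_hom[OF z g] .
  show "add C (cmp C g (zer C X Y)) (cmp C g (zer C X Y)) = cmp C g (zer C X Y)"
    using cmp_add_right[OF z z g] add_zero_left[OF z] by simp
qed

lemma neg_zero: "X \<in> Obj C \<Longrightarrow> Y \<in> Obj C \<Longrightarrow> neg C (zer C X Y) = zer C X Y"
  by (metis add_neg_left add_zero_right neg_hom zer_hom)

lemma neg_neg: "f \<in> Hom C X Y \<Longrightarrow> neg C (neg C f) = f"
  by (metis add_neg_right neg_hom neg_unique)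

lemma cmp_neg_left:
  assumes f: "f \<in> Hom C X Y" and g: "g \<in> Hom C Y Z"
  shows "cmp C (neg C g) f = neg C (cmp C g f)"
proof (rule neg_unique)
  show "cmp C (neg C g) f \<in> Hom C X Z" using cmp_hom[OF f neg_hom[OF g]] .
  show "cmp C g f \<in> Hom C X Z" using cmp_hom[OF f g] .
  show "add C (cmp C (neg C g) f) (cmp C g f) = zer C X Z"
    using cmp_add_left[OF f neg_hom[OF g] g] add_neg_left[OF g]
      cmp_zero_left[OF f hom_objR[OF g]] by simp
qed

lemma cmp_neg_right:
  assumes f: "f \<in> Hom C X Y" and g: "g \<in> Hom C Y Z"
  shows "cmp C g (neg C f) = neg C (cmp C g f)"
proof (rule neg_unique)
  show "cmp C g (neg C f) \<in> Hom C X Z" using cmp_hom[OF neg_hom[OF f] g] .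
  show "cmp C g f \<in> Hom C X Z" using cmp_hom[OF f g] .
  show "add C (cmp C g (neg C f)) (cmp C g f) = zer C X Z"
    using cmp_add_right[OF neg_hom[OF f] f g] add_neg_left[OF f]
      cmp_zero_right[OF g hom_objL[OF f]] by simp
qed

lemma shO_obj: "X \<in> Obj C \<Longrightarrow> shO C X \<in> Obj C"
  using shift_autoequivalence unfolding shift_autoequivalence_def by blast

lemma shM_hom: "f \<in> Hom C X Y \<Longrightarrow> shM C f \<in> Hom C (shO C X) (shO C Y)"
  using shift_autoequivalence unfolding shift_autoequivalence_def by blast

lemma shM_id: "X \<in> Obj C \<Longrightarrow> shM C (idm C X) = idm C (shO C X)"
  using shift_autoequivalence unfolding shift_autoequivalence_def by blast

lemma shM_cmp:
  "f \<in> Hom C X Y \<Longrightarrow> g \<in> Hom C Y Z \<Longrightarrow> shM C (cmp C g f) = cmp C (shM C g) (shM C f)"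
  using shift_autoequivalence unfolding shift_autoequivalence_def by blast

lemma shM_add:
  "f \<in> Hom C X Y \<Longrightarrow> f' \<in> Hom C X Y \<Longrightarrow> shM C (add C f f') = add C (shM C f) (shM C f')"
  using shift_autoequivalence unfolding shift_autoequivalence_def by blast

lemma shM_bij:
  "X \<in> Obj C \<Longrightarrow> Y \<in> Obj C \<Longrightarrow> bij_betw (shM C) (Hom C X Y) (Hom C (shO C X) (shO C Y))"
  using shift_autoequivalence unfolding shift_autoequivalence_def by blast

lemma shM_zero:
  assumes X: "X \<in> Obj C" and Y: "Y \<in> Obj C"
  shows "shM C (zer C X Y) = zer C (shO C X) (shO C Y)"
  using add_self_eq_zero[OF shM_hom[OF zer_hom[OF X Y]]]
    shM_add[OF zer_hom[OF X Y] zer_hom[OF X Y]] add_zero_left[OF zer_hom[OF X Y]] by simp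

lemma shM_neg:
  assumes f: "f \<in> Hom C X Y"
  shows "shM C (neg C f) = neg C (shM C f)"
proof (rule neg_unique)
  show "shM C (neg C f) \<in> Hom C (shO C X) (shO C Y)" using shM_hom[OF neg_hom[OF f]] .
  show "shM C f \<in> Hom C (shO C X) (shO C Y)" using shM_hom[OF f] .
  show "add C (shM C (neg C f)) (shM C f) = zer C (shO C X) (shO C Y)"
    using shM_add[OF neg_hom[OF f] f] add_neg_left[OF f] shM_zero[OF hom_objL[OF f] hom_objR[OF f]]
    by simp
qed

section \<open>Distinguished triangles\<close>

lemma dist_homs:
  "(X, Y, Z, f, g, h) \<in> dist C \<Longrightarrow> f \<in> Hom C X Y \<and> g \<in> Hom C Y Z \<and> h \<in> Hom C Z (shO C X)"
  using triangulated unfolding triangulated_def is_triangle_def by fastforce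

lemma dist_identity:
  "X \<in> Obj C \<Longrightarrow> is_zero_obj C Z \<Longrightarrow> (X, X, Z, idm C X, zer C X Z, zer C Z (shO C X)) \<in> dist C"
  using triangulated unfolding triangulated_def by (elim conjE) blast

lemma dist_cone_exists: "f \<in> Hom C X Y \<Longrightarrow> \<exists>Z g h. (X, Y, Z, f, g, h) \<in> dist C"
  using triangulated unfolding triangulated_def by (elim conjE) blast

lemma dist_rotate:
  "f \<in> Hom C X Y \<Longrightarrow>
   (X, Y, Z, f, g, h) \<in> dist C \<longleftrightarrow> (Y, Z, shO C X, g, h, neg C (shM C f)) \<in> dist C"
  using triangulated unfolding triangulated_def by (elim conjE) blast

lemma dist_morphism_completion:
  assumes "(X, Y, Z, f, g, h) \<in> dist C" "(X', Y', Z', f', g', h') \<in> dist C"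
    "a \<in> Hom C X X'" "b \<in> Hom C Y Y'" "cmp C b f = cmp C f' a"
  shows "\<exists>c \<in> Hom C Z Z'. cmp C c g = cmp C g' b \<and> cmp C (shM C a) h = cmp C h' c"
proof -
  have "\<forall>X Y Z f g h X' Y' Z' f' g' h' a b.
      (X, Y, Z, f, g, h) \<in> dist C \<longrightarrow> (X', Y', Z', f', g', h') \<in> dist C \<longrightarrow>
      a \<in> Hom C X X' \<longrightarrow> b \<in> Hom C Y Y' \<longrightarrow> cmp C b f = cmp C f' a \<longrightarrow>
      (\<exists>c \<in> Hom C Z Z'. cmp C c g = cmp C g' b \<and> cmp C (shM C a) h = cmp C h' c)"
    using triangulated unfolding triangulated_def by (elim conjE)
  then show ?thesis using assms by blast
qed

lemma zero_obj_obj: "is_zero_obj C Z \<Longrightarrow> Z \<in> Obj C"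
  unfolding is_zero_obj_def by blast

lemma zero_obj_shift:
  assumes Z: "is_zero_obj C Z"
  shows "is_zero_obj C (shO C Z)"
proof -
  have ZO: "Z \<in> Obj C" using zero_obj_obj[OF Z] .
  have "idm C Z = zer C Z Z"
    using Z id_hom[OF ZO] unfolding is_zero_obj_def by blast
  then have id_zero: "idm C (shO C Z) = zer C (shO C Z) (shO C Z)"
    using shM_id[OF ZO] shM_zero[OF ZO ZO] by simp
  show ?thesis
    unfolding is_zero_obj_def
  proof (intro conjI ballI)
    show "shO C Z \<in> Obj C" using shO_obj[OF ZO] .
  next
    fix X f assume "f \<in> Hom C (shO C Z) X"
    then show "f = zer C (shO C Z) X"
      using id_right id_zero cmp_zero_right[OF _ shO_obj[OF ZO]] by metis
  next
    fix X f assume "f \<in> Hom C X (shO C Z)"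
    then show "f = zer C X (shO C Z)"
      using id_left id_zero cmp_zero_left[OF _ shO_obj[OF ZO]] by metis
  qed
qed

lemma dist_cmp_zero:
  assumes T: "(X, Y, Z, f, g, h) \<in> dist C"
  shows "cmp C g f = zer C X Z"
proof -
  obtain Z0 where Z0: "is_zero_obj C Z0" using zero_obj_exists by blast
  have f: "f \<in> Hom C X Y" and g: "g \<in> Hom C Y Z" using dist_homs[OF T] by auto
  have X: "X \<in> Obj C" using hom_objL[OF f] .
  obtain t where t: "t \<in> Hom C Z0 Z" "cmp C t (zer C X Z0) = cmp C g f"
    using dist_morphism_completion[OF dist_identity[OF X Z0] T id_hom[OF X] f refl] by blast
  then show ?thesis using cmp_zero_right[OF t(1) X] by simp
qed

lemma dist_zero_first:
  assumes Z0: "is_zero_obj C Z0" and W: "W \<in> Obj C"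
  shows "(Z0, W, W, zer C Z0 W, idm C W, zer C W (shO C Z0)) \<in> dist C"
proof -
  have O: "Z0 \<in> Obj C" using zero_obj_obj[OF Z0] .
  have "neg C (shM C (zer C Z0 W)) = zer C (shO C Z0) (shO C W)"
    using shM_zero[OF O W] neg_zero[OF shO_obj[OF O] shO_obj[OF W]] by simp
  then show ?thesis
    using dist_identity[OF W zero_obj_shift[OF Z0]] dist_rotate[OF zer_hom[OF O W]] by simp
qed

lemma dist_weak_cokernel:
  assumes T: "(X, Y, Z, f, g, h) \<in> dist C" and t: "t \<in> Hom C Z W"
    and tg: "cmp C t g = zer C Y W"
  shows "\<exists>\<phi> \<in> Hom C (shO C X) W. t = cmp C \<phi> h"
proof -
  obtain Z0 where Z0: "is_zero_obj C Z0" using zero_obj_exists by blast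
  have O: "Z0 \<in> Obj C" using zero_obj_obj[OF Z0] .
  have f: "f \<in> Hom C X Y" and g: "g \<in> Hom C Y Z" using dist_homs[OF T] by auto
  have W: "W \<in> Obj C" and Y: "Y \<in> Obj C" using hom_objR[OF t] hom_objL[OF g] .
  have "cmp C t g = cmp C (zer C Z0 W) (zer C Y Z0)"
    using tg cmp_zero_right[OF zer_hom[OF O W] Y] by simp
  then obtain \<phi> where "\<phi> \<in> Hom C (shO C X) W" "cmp C \<phi> h = cmp C (idm C W) t"
    using dist_morphism_completion[OF dist_rotate[OF f, THEN iffD1, OF T]
        dist_zero_first[OF Z0 W] zer_hom[OF Y O] t] by blast
  then show ?thesis using id_left[OF t] by auto
qed

lemma invertible_if_complement_square_zero:
  assumes u: "u \<in> Hom C Z Z" and e: "e \<in> Hom C Z Z"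
    and ue: "add C u e = idm C Z" and ee: "cmp C e e = zer C Z Z"
  shows "\<exists>u' \<in> Hom C Z Z. cmp C u u' = idm C Z \<and> cmp C u' u = idm C Z"
proof -
  have I: "idm C Z \<in> Hom C Z Z" using id_hom[OF hom_objL[OF u]] .
  have "add C (cmp C e u) (cmp C e e) = e"
    using cmp_add_right[OF u e e] ue id_right[OF e] by simp
  then have eu: "cmp C e u = e" using ee add_zero_right[OF cmp_hom[OF u e]] by simp
  have "add C (cmp C u e) (cmp C e e) = e"
    using cmp_add_left[OF e u e] ue id_left[OF e] by simp
  then have ue': "cmp C u e = e" using ee add_zero_right[OF cmp_hom[OF e u]] by simp
  have "cmp C u (add C (idm C Z) e) = idm C Z"
    using cmp_add_right[OF I e u] id_right[OF u] ue' ue by simp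
  moreover have "cmp C (add C (idm C Z) e) u = idm C Z"
    using cmp_add_left[OF u I e] id_left[OF u] eu ue by simp
  ultimately show ?thesis using add_hom[OF I e] by blast
qed

text \<open>An endomorphism of the cone fixing the two adjacent morphisms differs from the identity by
  a map factoring through both of them, and such a map squares to zero.\<close>

lemma dist_endo_invertible:
  assumes T: "(X, Y, Z, f, g, h) \<in> dist C" and u: "u \<in> Hom C Z Z"
    and ug: "cmp C u g = g" and hu: "cmp C h u = h"
  shows "\<exists>u' \<in> Hom C Z Z. cmp C u u' = idm C Z \<and> cmp C u' u = idm C Z"
proof -
  have g: "g \<in> Hom C Y Z" and h: "h \<in> Hom C Z (shO C X)" using dist_homs[OF T] by auto
  have Z: "Z \<in> Obj C" using hom_objL[OF u] .
  have I: "idm C Z \<in> Hom C Z Z" using id_hom[OF Z] .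
  define e where "e = add C (idm C Z) (neg C u)"
  have e: "e \<in> Hom C Z Z" unfolding e_def using add_hom[OF I neg_hom[OF u]] .
  have "add C u e = add C (add C u (neg C u)) (idm C Z)"
    unfolding e_def using add_comm[OF I neg_hom[OF u]] add_assoc[OF u neg_hom[OF u] I] by simp
  then have ue: "add C u e = idm C Z" using add_neg_right[OF u] add_zero_left[OF I] by simp
  have "cmp C e g = zer C Y Z"
    unfolding e_def using cmp_add_left[OF g I neg_hom[OF u]] id_left[OF g] cmp_neg_left[OF g u] ug
      add_neg_right[OF g] by simp
  then obtain \<phi> where \<phi>: "\<phi> \<in> Hom C (shO C X) Z" "e = cmp C \<phi> h"
    using dist_weak_cokernel[OF T e] by blast
  have "cmp C h e = zer C Z (shO C X)"
    unfolding e_def using cmp_add_right[OF I neg_hom[OF u] h] id_right[OF h] cmp_neg_right[OF u h] hu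
      add_neg_right[OF h] by simp
  then have "cmp C e e = zer C Z Z"
    using cmp_assoc[OF e h \<phi>(1)] \<phi>(2) cmp_zero_right[OF \<phi>(1) Z] by simp
  then show ?thesis using invertible_if_complement_square_zero[OF u e ue] by blast
qed

lemma dist_lift_to_shift:
  assumes T: "(X, Y, Z, f, g, h) \<in> dist C" and x: "x \<in> Hom C N X"
    and fx: "cmp C f x = zer C N Y"
  shows "\<exists>\<gamma> \<in> Hom C (shO C N) Z. cmp C h \<gamma> = shM C x"
proof -
  obtain Z0 where Z0: "is_zero_obj C Z0" using zero_obj_exists by blast
  have O: "Z0 \<in> Obj C" and N: "N \<in> Obj C" using zero_obj_obj[OF Z0] hom_objL[OF x] .
  have f: "f \<in> Hom C X Y" using dist_homs[OF T] by blast
  have Y: "Y \<in> Obj C" using hom_objR[OF f] .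
  have T0: "(N, Z0, shO C N, zer C N Z0, zer C Z0 (shO C N), neg C (shM C (idm C N))) \<in> dist C"
    using dist_identity[OF N Z0] dist_rotate[OF id_hom[OF N]] by blast
  have "cmp C (zer C Z0 Y) (zer C N Z0) = cmp C f (neg C x)"
    using cmp_zero_right[OF zer_hom[OF O Y] N] cmp_neg_right[OF x f] fx neg_zero[OF N Y] by simp
  then obtain \<gamma> where \<gamma>: "\<gamma> \<in> Hom C (shO C N) Z"
      and h\<gamma>: "cmp C (shM C (neg C x)) (neg C (shM C (idm C N))) = cmp C h \<gamma>"
    using dist_morphism_completion[OF T0 T neg_hom[OF x] zer_hom[OF O Y]] by blast
  have I: "idm C (shO C N) \<in> Hom C (shO C N) (shO C N)" using id_hom[OF shO_obj[OF N]] .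
  have X: "shM C x \<in> Hom C (shO C N) (shO C X)" using shM_hom[OF x] .
  have "cmp C (shM C (neg C x)) (neg C (shM C (idm C N))) = shM C x"
    using shM_neg[OF x] shM_id[OF N] cmp_neg_left[OF neg_hom[OF I] X] cmp_neg_right[OF I X]
      neg_neg[OF cmp_hom[OF I X]] id_right[OF X] by simp
  then show ?thesis using \<gamma> h\<gamma> by auto
qed

section \<open>Splitting the cone along a summand\<close>

lemma biproduct_shift:
  assumes "biproduct C S X Y i1 p1 i2 p2"
  shows "biproduct C (shO C S) (shO C X) (shO C Y) (shM C i1) (shM C p1) (shM C i2) (shM C p2)"
proof -
  have i1: "i1 \<in> Hom C X S" and p1: "p1 \<in> Hom C S X" and i2: "i2 \<in> Hom C Y S"
    and p2: "p2 \<in> Hom C S Y" and X: "X \<in> Obj C" and Y: "Y \<in> Obj C" and S: "S \<in> Obj C"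
    using assms unfolding biproduct_def by auto
  show ?thesis
    using assms shO_obj[OF S] shO_obj[OF X] shO_obj[OF Y] shM_hom[OF i1] shM_hom[OF p1]
      shM_hom[OF i2] shM_hom[OF p2] shM_cmp[OF i1 p1] shM_cmp[OF i2 p2] shM_cmp[OF i1 p2]
      shM_cmp[OF i2 p1] shM_id[OF X] shM_id[OF Y] shM_id[OF S] shM_zero[OF X Y] shM_zero[OF Y X]
      shM_add[OF cmp_hom[OF p1 i1] cmp_hom[OF p2 i2]] shM_cmp[OF p1 i1] shM_cmp[OF p2 i2]
    unfolding biproduct_def by simp
qed

lemma biproduct_retracts:
  assumes "biproduct C S X Y i1 p1 i2 p2"
  shows "retract C X S" and "retract C Y S"
  using assms unfolding biproduct_def retract_def by blast+

lemma biproduct_factor_through_first: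
  assumes bp: "biproduct C S X Y i1 p1 i2 p2" and f: "f \<in> Hom C S Z"
    and fi2: "cmp C f i2 = zer C Y Z"
  shows "cmp C (cmp C f i1) p1 = f"
proof -
  have i1: "i1 \<in> Hom C X S" and p1: "p1 \<in> Hom C S X" and i2: "i2 \<in> Hom C Y S"
    and p2: "p2 \<in> Hom C S Y" and sum: "add C (cmp C i1 p1) (cmp C i2 p2) = idm C S"
    using bp unfolding biproduct_def by auto
  have "f = add C (cmp C (cmp C f i1) p1) (cmp C (cmp C f i2) p2)"
    using cmp_add_right[OF cmp_hom[OF p1 i1] cmp_hom[OF p2 i2] f] sum id_right[OF f]
      cmp_assoc[OF p1 i1 f] cmp_assoc[OF p2 i2 f] by simp
  then show ?thesis
    using fi2 cmp_zero_left[OF p2 hom_objR[OF f]] add_zero_right[OF cmp_hom[OF p1 cmp_hom[OF i1 f]]]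
    by simp
qed

lemma idempotent_invertible_eq_id:
  assumes v: "v \<in> Hom C Z Z" and v': "v' \<in> Hom C Z Z"
    and v'v: "cmp C v' v = idm C Z" and vv: "cmp C v v = v"
  shows "v = idm C Z"
  using cmp_assoc[OF v v v'] v'v vv id_left[OF v] by simp

lemma orthogonal_retractions_sum_idempotent:
  assumes \<beta>: "\<beta> \<in> Hom C X B" and \<alpha>: "\<alpha> \<in> Hom C B X"
    and \<gamma>: "\<gamma> \<in> Hom C Y B" and \<delta>: "\<delta> \<in> Hom C B Y"
    and \<alpha>\<beta>: "cmp C \<alpha> \<beta> = idm C X" and \<delta>\<gamma>: "cmp C \<delta> \<gamma> = idm C Y"
    and \<alpha>\<gamma>: "cmp C \<alpha> \<gamma> = zer C Y X" and \<delta>\<beta>: "cmp C \<delta> \<beta> = zer C X Y"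
  defines "v \<equiv> add C (cmp C \<beta> \<alpha>) (cmp C \<gamma> \<delta>)"
  shows "cmp C v v = v"
proof -
  have v: "v \<in> Hom C B B" unfolding v_def using add_hom[OF cmp_hom[OF \<alpha> \<beta>] cmp_hom[OF \<delta> \<gamma>]] .
  have "cmp C \<alpha> v = add C (cmp C (cmp C \<alpha> \<beta>) \<alpha>) (cmp C (cmp C \<alpha> \<gamma>) \<delta>)"
    unfolding v_def using cmp_add_right[OF cmp_hom[OF \<alpha> \<beta>] cmp_hom[OF \<delta> \<gamma>] \<alpha>]
      cmp_assoc[OF \<alpha> \<beta> \<alpha>] cmp_assoc[OF \<delta> \<gamma> \<alpha>] by simp
  then have \<alpha>v: "cmp C \<alpha> v = \<alpha>"
    using \<alpha>\<beta> \<alpha>\<gamma> id_left[OF \<alpha>] cmp_zero_left[OF \<delta> hom_objL[OF \<beta>]] add_zero_right[OF \<alpha>] by simp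
  have "cmp C \<delta> v = add C (cmp C (cmp C \<delta> \<beta>) \<alpha>) (cmp C (cmp C \<delta> \<gamma>) \<delta>)"
    unfolding v_def using cmp_add_right[OF cmp_hom[OF \<alpha> \<beta>] cmp_hom[OF \<delta> \<gamma>] \<delta>]
      cmp_assoc[OF \<alpha> \<beta> \<delta>] cmp_assoc[OF \<delta> \<gamma> \<delta>] by simp
  then have \<delta>v: "cmp C \<delta> v = \<delta>"
    using \<delta>\<beta> \<delta>\<gamma> id_left[OF \<delta>] cmp_zero_left[OF \<alpha> hom_objL[OF \<gamma>]] add_zero_left[OF \<delta>] by simp
  have "cmp C v v = add C (cmp C (cmp C \<beta> \<alpha>) v) (cmp C (cmp C \<gamma> \<delta>) v)"
    using cmp_add_left[OF v cmp_hom[OF \<alpha> \<beta>] cmp_hom[OF \<delta> \<gamma>]] by (simp only: v_def)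
  also have "\<dots> = v"
    using cmp_assoc[OF v \<alpha> \<beta>] cmp_assoc[OF v \<delta> \<gamma>] \<alpha>v \<delta>v v_def by simp
  finally show ?thesis .
qed

lemma dist_cone_retract:
  assumes T: "(A, M, B, c, g, k) \<in> dist C" and T1: "(A1, M, B1, c1, g1, k1) \<in> dist C"
    and i: "i \<in> Hom C A1 A" and p: "p \<in> Hom C A A1" and pi: "cmp C p i = idm C A1"
    and c1: "c1 = cmp C c i" and c: "c = cmp C c1 p"
  shows "\<exists>\<alpha> \<in> Hom C B B1. \<exists>\<beta> \<in> Hom C B1 B. cmp C \<alpha> \<beta> = idm C B1 \<and>
    cmp C \<alpha> g = g1 \<and> cmp C k1 \<alpha> = cmp C (shM C p) k \<and>
    cmp C \<beta> g1 = g \<and> cmp C k \<beta> = cmp C (shM C i) k1"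
proof -
  have cM: "c \<in> Hom C A M" and g: "g \<in> Hom C M B" and k: "k \<in> Hom C B (shO C A)"
    using dist_homs[OF T] by auto
  have c1M: "c1 \<in> Hom C A1 M" and g1: "g1 \<in> Hom C M B1" and k1: "k1 \<in> Hom C B1 (shO C A1)"
    using dist_homs[OF T1] by auto
  have IM: "idm C M \<in> Hom C M M" using id_hom[OF hom_objR[OF cM]] .
  obtain \<alpha> where \<alpha>: "\<alpha> \<in> Hom C B B1" and \<alpha>g: "cmp C \<alpha> g = g1"
      and k1\<alpha>: "cmp C (shM C p) k = cmp C k1 \<alpha>"
    using dist_morphism_completion[OF T T1 p IM] id_left[OF cM] c id_right[OF g1] by auto
  obtain \<beta> where \<beta>: "\<beta> \<in> Hom C B1 B" and \<beta>g1: "cmp C \<beta> g1 = g"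
      and k\<beta>: "cmp C (shM C i) k1 = cmp C k \<beta>"
    using dist_morphism_completion[OF T1 T i IM] id_left[OF c1M] c1 id_right[OF g] by auto
  define u where "u = cmp C \<alpha> \<beta>"
  have u: "u \<in> Hom C B1 B1" unfolding u_def using cmp_hom[OF \<beta> \<alpha>] .
  have ug1: "cmp C u g1 = g1" unfolding u_def using cmp_assoc[OF g1 \<beta> \<alpha>] \<beta>g1 \<alpha>g by simp
  have "cmp C k1 u = cmp C (cmp C (shM C p) (shM C i)) k1"
    unfolding u_def using cmp_assoc[OF \<beta> \<alpha> k1] k1\<alpha> cmp_assoc[OF \<beta> k shM_hom[OF p]] k\<beta>
      cmp_assoc[OF k1 shM_hom[OF i] shM_hom[OF p]] by simp
  then have k1u: "cmp C k1 u = k1"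
    using shM_cmp[OF i p] pi shM_id[OF hom_objL[OF i]] id_left[OF k1] by simp
  obtain w where w: "w \<in> Hom C B1 B1" and uw: "cmp C u w = idm C B1" and wu: "cmp C w u = idm C B1"
    using dist_endo_invertible[OF T1 u ug1 k1u] by blast
  have wg1: "cmp C w g1 = g1" using ug1 cmp_assoc[OF g1 u w] wu id_left[OF g1] by metis
  have k1w: "cmp C k1 w = k1" using k1u cmp_assoc[OF w u k1] uw id_right[OF k1] by metis
  have "cmp C \<alpha> (cmp C \<beta> w) = idm C B1"
    using cmp_assoc[OF w \<beta> \<alpha>] uw unfolding u_def by simp
  moreover have "cmp C (cmp C \<beta> w) g1 = g"
    using cmp_assoc[OF g1 w \<beta>] wg1 \<beta>g1 by simp
  moreover have "cmp C k (cmp C \<beta> w) = cmp C (shM C i) k1"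
    using cmp_assoc[OF w \<beta> k] k\<beta> cmp_assoc[OF w k1 shM_hom[OF i]] k1w by simp
  ultimately show ?thesis using \<alpha> \<alpha>g k1\<alpha> cmp_hom[OF w \<beta>] by metis
qed

lemma dist_cone_complement:
  assumes T: "(A, M, B, c, g, k) \<in> dist C" and x: "x \<in> Hom C N A"
    and cx: "cmp C c x = zer C N M"
    and \<alpha>: "\<alpha> \<in> Hom C B B1" and \<beta>: "\<beta> \<in> Hom C B1 B" and \<alpha>\<beta>: "cmp C \<alpha> \<beta> = idm C B1"
    and k1: "k1 \<in> Hom C B1 A1'" and q: "q \<in> Hom C (shO C A) A1'" and j: "j \<in> Hom C A1' (shO C A)"
    and k1\<alpha>: "cmp C k1 \<alpha> = cmp C q k" and k\<beta>: "cmp C k \<beta> = cmp C j k1"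
    and qx: "cmp C q (shM C x) = zer C (shO C N) A1'"
  shows "\<exists>\<gamma> \<in> Hom C (shO C N) B. cmp C \<alpha> \<gamma> = zer C (shO C N) B1 \<and> cmp C k \<gamma> = shM C x"
proof -
  have k: "k \<in> Hom C B (shO C A)" using dist_homs[OF T] by blast
  obtain \<gamma> where \<gamma>: "\<gamma> \<in> Hom C (shO C N) B" and k\<gamma>: "cmp C k \<gamma> = shM C x"
    using dist_lift_to_shift[OF T x cx] by blast
  have NO: "shO C N \<in> Obj C" using hom_objL[OF \<gamma>] .
  have \<alpha>\<gamma>: "cmp C \<alpha> \<gamma> \<in> Hom C (shO C N) B1" using cmp_hom[OF \<gamma> \<alpha>] .
  have \<beta>\<alpha>\<gamma>: "cmp C \<beta> (cmp C \<alpha> \<gamma>) \<in> Hom C (shO C N) B" using cmp_hom[OF \<alpha>\<gamma> \<beta>] .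
  define \<gamma>' where "\<gamma>' = add C \<gamma> (neg C (cmp C \<beta> (cmp C \<alpha> \<gamma>)))"
  have \<gamma>': "\<gamma>' \<in> Hom C (shO C N) B" unfolding \<gamma>'_def using add_hom[OF \<gamma> neg_hom[OF \<beta>\<alpha>\<gamma>]] .
  have "cmp C \<alpha> \<gamma>' = add C (cmp C \<alpha> \<gamma>) (neg C (cmp C (cmp C \<alpha> \<beta>) (cmp C \<alpha> \<gamma>)))"
    unfolding \<gamma>'_def using cmp_add_right[OF \<gamma> neg_hom[OF \<beta>\<alpha>\<gamma>] \<alpha>] cmp_neg_right[OF \<beta>\<alpha>\<gamma> \<alpha>]
      cmp_assoc[OF \<alpha>\<gamma> \<beta> \<alpha>] by simp
  then have "cmp C \<alpha> \<gamma>' = zer C (shO C N) B1"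
    using \<alpha>\<beta> id_left[OF \<alpha>\<gamma>] add_neg_right[OF \<alpha>\<gamma>] by simp
  moreover have "cmp C k1 (cmp C \<alpha> \<gamma>) = zer C (shO C N) A1'"
    using cmp_assoc[OF \<gamma> \<alpha> k1] k1\<alpha> cmp_assoc[OF \<gamma> k q] k\<gamma> qx by simp
  then have "cmp C (cmp C k \<beta>) (cmp C \<alpha> \<gamma>) = zer C (shO C N) (shO C A)"
    using k\<beta> cmp_assoc[OF \<alpha>\<gamma> k1 j] cmp_zero_right[OF j NO] by simp
  then have "cmp C k \<gamma>' = shM C x"
    unfolding \<gamma>'_def using cmp_add_right[OF \<gamma> neg_hom[OF \<beta>\<alpha>\<gamma>] k] cmp_neg_right[OF \<beta>\<alpha>\<gamma> k]
      cmp_assoc[OF \<alpha>\<gamma> \<beta> k] k\<gamma> neg_zero[OF NO hom_objR[OF k]] add_zero_right[OF shM_hom[OF x]]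
    by simp
  ultimately show ?thesis using \<gamma>' by blast
qed

text \<open>With \<open>\<delta> = p0[1] \<circ> k\<close>, the endomorphism \<open>\<beta>\<alpha> + \<gamma>\<delta>\<close> of \<open>B\<close>
  fixes both \<open>g\<close> and \<open>k\<close>, hence is invertible, and it is idempotent, hence the identity.\<close>

lemma dist_cone_split_by_summand:
  assumes T: "(A, M, B, c, g, k) \<in> dist C"
    and bp: "biproduct C A A1 A0 i1 p1 i0 p0" and ci0: "cmp C c i0 = zer C A0 M"
    and T1: "(A1, M, B1, cmp C c i1, g1, k1) \<in> dist C"
  shows "\<exists>\<alpha> \<beta> \<gamma> \<delta>. biproduct C B B1 (shO C A0) \<beta> \<alpha> \<gamma> \<delta> \<and> cmp C \<beta> g1 = g \<and>
    k = add C (cmp C (shM C i1) (cmp C k1 \<alpha>)) (cmp C (shM C i0) \<delta>)"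
proof -
  have cM: "c \<in> Hom C A M" and g: "g \<in> Hom C M B" and k: "k \<in> Hom C B (shO C A)"
    using dist_homs[OF T] by auto
  have g1: "g1 \<in> Hom C M B1" and k1: "k1 \<in> Hom C B1 (shO C A1)" using dist_homs[OF T1] by auto
  have i1: "i1 \<in> Hom C A1 A" and p1: "p1 \<in> Hom C A A1" and i0: "i0 \<in> Hom C A0 A"
    and p0: "p0 \<in> Hom C A A0" and p1i1: "cmp C p1 i1 = idm C A1"
    using bp unfolding biproduct_def by auto
  have sbp: "biproduct C (shO C A) (shO C A1) (shO C A0)
      (shM C i1) (shM C p1) (shM C i0) (shM C p0)" using biproduct_shift[OF bp] .
  then have I1: "shM C i1 \<in> Hom C (shO C A1) (shO C A)" and P1: "shM C p1 \<in> Hom C (shO C A) (shO C A1)"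
    and I0: "shM C i0 \<in> Hom C (shO C A0) (shO C A)" and P0: "shM C p0 \<in> Hom C (shO C A) (shO C A0)"
    and A0s: "shO C A0 \<in> Obj C"
    unfolding biproduct_def by auto
  have "c = cmp C (cmp C c i1) p1" using biproduct_factor_through_first[OF bp cM ci0] by simp
  then obtain \<alpha> \<beta> where \<alpha>: "\<alpha> \<in> Hom C B B1" and \<beta>: "\<beta> \<in> Hom C B1 B" and \<alpha>\<beta>: "cmp C \<alpha> \<beta> = idm C B1"
    and \<alpha>g: "cmp C \<alpha> g = g1" and k1\<alpha>: "cmp C k1 \<alpha> = cmp C (shM C p1) k"
    and \<beta>g1: "cmp C \<beta> g1 = g" and k\<beta>: "cmp C k \<beta> = cmp C (shM C i1) k1"
    using dist_cone_retract[OF T T1 i1 p1 p1i1 refl] by blast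
  obtain \<gamma> where \<gamma>: "\<gamma> \<in> Hom C (shO C A0) B" and \<alpha>\<gamma>: "cmp C \<alpha> \<gamma> = zer C (shO C A0) B1"
    and k\<gamma>: "cmp C k \<gamma> = shM C i0"
    using dist_cone_complement[OF T i0 ci0 \<alpha> \<beta> \<alpha>\<beta> k1 P1 I1 k1\<alpha> k\<beta>] sbp
    unfolding biproduct_def by blast
  define \<delta> where "\<delta> = cmp C (shM C p0) k"
  have \<delta>: "\<delta> \<in> Hom C B (shO C A0)" unfolding \<delta>_def using cmp_hom[OF k P0] .
  have \<delta>\<gamma>: "cmp C \<delta> \<gamma> = idm C (shO C A0)"
    unfolding \<delta>_def using cmp_assoc[OF \<gamma> k P0] k\<gamma> sbp unfolding biproduct_def by simp
  have \<delta>\<beta>: "cmp C \<delta> \<beta> = zer C B1 (shO C A0)"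
    unfolding \<delta>_def using cmp_assoc[OF \<beta> k P0] k\<beta> cmp_assoc[OF k1 I1 P0] sbp
      cmp_zero_left[OF k1 A0s] unfolding biproduct_def by simp
  have k_split: "add C (cmp C (shM C i1) (cmp C k1 \<alpha>)) (cmp C (shM C i0) \<delta>) = k"
    unfolding \<delta>_def using k1\<alpha> cmp_assoc[OF k P1 I1] cmp_assoc[OF k P0 I0]
      cmp_add_left[OF k cmp_hom[OF P1 I1] cmp_hom[OF P0 I0]] sbp id_left[OF k]
    unfolding biproduct_def by simp
  define v where "v = add C (cmp C \<beta> \<alpha>) (cmp C \<gamma> \<delta>)"
  have v: "v \<in> Hom C B B" unfolding v_def using add_hom[OF cmp_hom[OF \<alpha> \<beta>] cmp_hom[OF \<delta> \<gamma>]] .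
  have "cmp C \<delta> g = zer C M (shO C A0)"
    unfolding \<delta>_def using cmp_assoc[OF g k P0] dist_cmp_zero[OF dist_rotate[OF cM, THEN iffD1, OF T]]
      cmp_zero_right[OF P0 hom_objL[OF g]] by simp
  then have vg: "cmp C v g = g"
    unfolding v_def using cmp_add_left[OF g cmp_hom[OF \<alpha> \<beta>] cmp_hom[OF \<delta> \<gamma>]]
      cmp_assoc[OF g \<alpha> \<beta>] cmp_assoc[OF g \<delta> \<gamma>] \<alpha>g \<beta>g1 cmp_zero_right[OF \<gamma> hom_objL[OF g]]
      add_zero_right[OF g] by simp
  have kv: "cmp C k v = k"
    unfolding v_def using cmp_add_right[OF cmp_hom[OF \<alpha> \<beta>] cmp_hom[OF \<delta> \<gamma>] k]
      cmp_assoc[OF \<alpha> \<beta> k] cmp_assoc[OF \<delta> \<gamma> k] k\<beta> k\<gamma> cmp_assoc[OF \<alpha> k1 I1] k_split by simp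
  obtain v' where "v' \<in> Hom C B B" "cmp C v' v = idm C B"
    using dist_endo_invertible[OF T v vg kv] by blast
  then have "v = idm C B"
    using idempotent_invertible_eq_id[OF v] orthogonal_retractions_sum_idempotent[OF \<beta> \<alpha> \<gamma> \<delta> \<alpha>\<beta> \<delta>\<gamma> \<alpha>\<gamma> \<delta>\<beta>]
    unfolding v_def by blast
  then have "biproduct C B B1 (shO C A0) \<beta> \<alpha> \<gamma> \<delta>"
    unfolding biproduct_def v_def using \<alpha> \<beta> \<gamma> \<delta> \<alpha>\<beta> \<delta>\<gamma> \<alpha>\<gamma> \<delta>\<beta> A0s hom_objL hom_objR by blast
  then show ?thesis using \<beta>g1 k_split by metis
qed

section \<open>Shifted classes of objects and retracts\<close>

lemma shift_pow_obj: "X \<in> Obj C \<Longrightarrow> (shO C ^^ n) X \<in> Obj C"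
  by (induction n) (auto intro: shO_obj)

lemma shift_pow_hom: "f \<in> Hom C X Y \<Longrightarrow> (shM C ^^ n) f \<in> Hom C ((shO C ^^ n) X) ((shO C ^^ n) Y)"
  by (induction n) (auto intro: shM_hom)

lemma shift_pow_id: "X \<in> Obj C \<Longrightarrow> (shM C ^^ n) (idm C X) = idm C ((shO C ^^ n) X)"
  by (induction n) (auto simp: shM_id shift_pow_obj)

lemma shift_pow_cmp:
  "f \<in> Hom C X Y \<Longrightarrow> g \<in> Hom C Y Z \<Longrightarrow>
   (shM C ^^ n) (cmp C g f) = cmp C ((shM C ^^ n) g) ((shM C ^^ n) f)"
  by (induction n) (simp_all add: shM_cmp[OF shift_pow_hom shift_pow_hom])

lemma shift_pow_bij:
  "X \<in> Obj C \<Longrightarrow> Y \<in> Obj C \<Longrightarrow>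
   bij_betw (shM C ^^ n) (Hom C X Y) (Hom C ((shO C ^^ n) X) ((shO C ^^ n) Y))"
proof (induction n)
  case 0 then show ?case by (simp add: bij_betw_def inj_on_def)
next
  case (Suc n)
  then show ?case
    using bij_betw_trans[OF Suc.IH shM_bij[OF shift_pow_obj shift_pow_obj]] by (simp add: comp_def)
qed

lemma retract_shift_pow:
  assumes "retract C Y X"
  shows "retract C ((shO C ^^ n) Y) ((shO C ^^ n) X)"
proof -
  obtain s r where s: "s \<in> Hom C Y X" and r: "r \<in> Hom C X Y" and rs: "cmp C r s = idm C Y"
    using assms unfolding retract_def by blast
  have "cmp C ((shM C ^^ n) r) ((shM C ^^ n) s) = idm C ((shO C ^^ n) Y)"
    using shift_pow_cmp[OF s r] rs shift_pow_id[OF hom_objL[OF s]] by simp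
  then show ?thesis unfolding retract_def using shift_pow_hom[OF s] shift_pow_hom[OF r] by blast
qed

lemma retract_iso:
  assumes "retract C Y X" and "iso C X X' f"
  shows "retract C Y X'"
proof -
  obtain s r where s: "s \<in> Hom C Y X" and r: "r \<in> Hom C X Y" and rs: "cmp C r s = idm C Y"
    using assms(1) unfolding retract_def by blast
  obtain f' where f: "f \<in> Hom C X X'" and f': "f' \<in> Hom C X' X" and f'f: "cmp C f' f = idm C X"
    using assms(2) unfolding iso_def by blast
  have "cmp C (cmp C r f') (cmp C f s) = idm C Y"
    using cmp_assoc[OF s f f'] f'f id_left[OF s] cmp_assoc[OF cmp_hom[OF s f] f' r] rs by simp
  then show ?thesis unfolding retract_def using cmp_hom[OF s f] cmp_hom[OF f' r] by blast
qed

lemma split_idempotent_iso: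
  assumes r: "r \<in> Hom C X Y" and s: "s \<in> Hom C Y X" and rs: "cmp C r s = idm C Y"
    and r': "r' \<in> Hom C X Y'" and s': "s' \<in> Hom C Y' X" and rs': "cmp C r' s' = idm C Y'"
    and sr: "cmp C s r = cmp C s' r'"
  shows "isomorphic C Y Y'"
proof -
  have srs: "cmp C (cmp C s r) s = s" using cmp_assoc[OF s r s] rs id_right[OF s] by simp
  have srs': "cmp C (cmp C s' r') s' = s'" using cmp_assoc[OF s' r' s'] rs' id_right[OF s'] by simp
  have "cmp C (cmp C r s') (cmp C r' s) = cmp C r (cmp C (cmp C s' r') s)"
    using cmp_assoc[OF s r' s'] cmp_assoc[OF cmp_hom[OF s r'] s' r] by simp
  then have 1: "cmp C (cmp C r s') (cmp C r' s) = idm C Y"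
    using sr srs rs by simp
  have "cmp C (cmp C r' s) (cmp C r s') = cmp C r' (cmp C (cmp C s r) s')"
    using cmp_assoc[OF s' r s] cmp_assoc[OF cmp_hom[OF s' r] s r'] by simp
  then have 2: "cmp C (cmp C r' s) (cmp C r s') = idm C Y'"
    using sr srs' rs' by simp
  show ?thesis
    unfolding isomorphic_def iso_def using cmp_hom[OF s r'] cmp_hom[OF s' r] 1 2 by blast
qed

text \<open>Since the shift is fully faithful, an idempotent of a shifted object comes from an idempotent
  of the original one, which splits by Karoubianity.\<close>

lemma karoubian_retract_of_shift_pow:
  assumes K: "karoubian C" and Z: "Z \<in> Obj C" and Y: "retract C Y ((shO C ^^ n) Z)"
  shows "\<exists>W. retract C W Z \<and> isomorphic C Y ((shO C ^^ n) W)"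
proof -
  obtain s r where s: "s \<in> Hom C Y ((shO C ^^ n) Z)" and r: "r \<in> Hom C ((shO C ^^ n) Z) Y"
    and rs: "cmp C r s = idm C Y"
    using Y unfolding retract_def by blast
  have e: "cmp C s r \<in> Hom C ((shO C ^^ n) Z) ((shO C ^^ n) Z)" using cmp_hom[OF r s] .
  have bij: "bij_betw (shM C ^^ n) (Hom C Z Z) (Hom C ((shO C ^^ n) Z) ((shO C ^^ n) Z))"
    using shift_pow_bij[OF Z Z] .
  then obtain e0 where e0: "e0 \<in> Hom C Z Z" and e0e: "(shM C ^^ n) e0 = cmp C s r"
    using e unfolding bij_betw_def by (metis imageE)
  have "(shM C ^^ n) (cmp C e0 e0) = cmp C (cmp C s r) (cmp C s r)"
    using shift_pow_cmp[OF e0 e0] e0e by simp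
  also have "\<dots> = (shM C ^^ n) e0"
    using cmp_assoc[OF r s cmp_hom[OF r s]] cmp_assoc[OF s r s] rs id_right[OF s] e0e by simp
  finally have "cmp C e0 e0 = e0"
    using bij cmp_hom[OF e0 e0] e0 unfolding bij_betw_def inj_on_def by blast
  then obtain W r0 s0 where r0: "r0 \<in> Hom C Z W" and s0: "s0 \<in> Hom C W Z"
    and rs0: "cmp C r0 s0 = idm C W" and sr0: "cmp C s0 r0 = e0"
    using K Z e0 unfolding karoubian_def by blast
  have "isomorphic C Y ((shO C ^^ n) W)"
  proof (rule split_idempotent_iso[OF r s rs shift_pow_hom[OF r0] shift_pow_hom[OF s0]])
    show "cmp C ((shM C ^^ n) r0) ((shM C ^^ n) s0) = idm C ((shO C ^^ n) W)"
      using shift_pow_cmp[OF s0 r0] rs0 shift_pow_id[OF hom_objL[OF s0]] by simp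
    show "cmp C s r = cmp C ((shM C ^^ n) s0) ((shM C ^^ n) r0)"
      using shift_pow_cmp[OF r0 s0] sr0 e0e by simp
  qed
  then show ?thesis using r0 s0 rs0 unfolding retract_def by blast
qed

lemma wshift_retract:
  assumes K: "karoubian C" and SO: "S \<subseteq> Obj C"
    and S_retract: "\<forall>X \<in> S. \<forall>Y \<in> Obj C. retract C Y X \<longrightarrow> Y \<in> S"
    and X: "X \<in> wshift C S i" and Y: "Y \<in> Obj C" and YX: "retract C Y X"
  shows "Y \<in> wshift C S i"
proof -
  obtain Z k l where Z: "Z \<in> S" and kl: "int l - int k = i"
    and "isomorphic C ((shO C ^^ k) X) ((shO C ^^ l) Z)"
    using X unfolding wshift_def by blast
  then have "retract C ((shO C ^^ k) Y) ((shO C ^^ l) Z)"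
    using retract_iso[OF retract_shift_pow[OF YX]] unfolding isomorphic_def by blast
  then obtain W where "retract C W Z" and "isomorphic C ((shO C ^^ k) Y) ((shO C ^^ l) W)"
    using karoubian_retract_of_shift_pow[OF K] Z SO by blast
  moreover have "W \<in> Obj C" using \<open>retract C W Z\<close> hom_objL unfolding retract_def by blast
  ultimately show ?thesis using S_retract Z Y kl unfolding wshift_def by blast
qed

lemma wshift_of_shift:
  assumes "shO C X \<in> wshift C S (i + 1)" and X: "X \<in> Obj C"
  shows "X \<in> wshift C S i"
proof -
  obtain Y k l where Y: "Y \<in> S" and kl: "int l - int k = i + 1"
    and iso: "isomorphic C ((shO C ^^ k) (shO C X)) ((shO C ^^ l) Y)"
    using assms(1) unfolding wshift_def by blast
  have "isomorphic C ((shO C ^^ Suc k) X) ((shO C ^^ l) Y)"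
    using iso by (simp add: funpow_swap1)
  moreover have "int l - int (Suc k) = i" using kl by simp
  ultimately show ?thesis unfolding wshift_def using X Y by blast
qed

lemma tri_iso_identity:
  assumes "(X, Y, Z, f, g, h) \<in> dist C"
  shows "tri_iso C (X, Y, Z, f, g, h) (X, Y, Z, f, g, h) (idm C X) (idm C Y) (idm C Z)"
proof -
  have f: "f \<in> Hom C X Y" and g: "g \<in> Hom C Y Z" and h: "h \<in> Hom C Z (shO C X)"
    using dist_homs[OF assms] by auto
  have "iso C W W (idm C W)" if "W \<in> Obj C" for W
    unfolding iso_def using id_hom[OF that] id_left[OF id_hom[OF that]] by blast
  moreover have "cmp C (shM C (idm C X)) h = cmp C h (idm C Z)"
    using shM_id[OF hom_objL[OF f]] id_left[OF h] id_right[OF h] by simp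
  ultimately show ?thesis
    unfolding tri_iso_def tri_morph_def
    using id_hom[OF hom_objL[OF f]] id_hom[OF hom_objR[OF f]] id_hom[OF hom_objR[OF g]]
      hom_objL[OF f] hom_objR[OF f] hom_objR[OF g]
      id_left[OF f] id_right[OF f] id_left[OF g] id_right[OF g] by simp
qed

end

lemma (in triangulated_category) weight_class_retract:
  assumes K: "karoubian C" and w: "weight_structure C Le Ge"
    and S: "S = Le \<or> S = Ge" and X: "X \<in> wshift C S i" and YX: "retract C Y X"
  shows "Y \<in> wshift C S i"
proof (rule wshift_retract[OF K _ _ X _ YX])
  show "S \<subseteq> Obj C" and "\<forall>X \<in> S. \<forall>Y \<in> Obj C. retract C Y X \<longrightarrow> Y \<in> S"
    using w S unfolding weight_structure_def by auto
  show "Y \<in> Obj C" using YX hom_objL unfolding retract_def by blast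
qed

theorem proposition1p2p3:
  fixes C :: "('o, 'm) tricat" and Le Ge :: "'o set" and M A B M1 M0 :: 'o and m :: int
    and c g k h j i1 p1 i0 p0 :: 'm
  assumes "triangulated C" and "karoubian C" and "weight_structure C Le Ge"
    and "M \<in> Obj C"
    and "(A, M, B, c, g, k) \<in> dist C"
    and "A \<in> w_le C Le m" and "B \<in> w_ge C Ge (m + 1)"
    and "h \<in> Hom C A A" and "j \<in> Hom C B B"
    and "tri_morph C (A, M, B, c, g, k) (A, M, B, c, g, k) h (idm C M) j"
    and "cmp C h h = h"
    and "biproduct C A M1 M0 i1 p1 i0 p0" and "cmp C i1 p1 = h"
  shows "M0 \<in> w_eq C Le Ge m \<and>
    (\<exists>M2 c1 g1 k1 S e2 q2 e0 q0 a b d.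
       (M1, M, M2, c1, g1, k1) \<in> dist C \<and> M1 \<in> w_le C Le m \<and> M2 \<in> w_ge C Ge (m + 1) \<and>
       biproduct C S M2 (shO C M0) e2 q2 e0 q0 \<and>
       tri_iso C (A, M, B, c, g, k)
         (A, M, S, cmp C c1 p1, cmp C e2 g1,
          add C (cmp C (shM C i1) (cmp C k1 q2)) (cmp C (shM C i0) q0)) a b d)"
proof -
  interpret triangulated_category C by unfold_locales (rule assms(1))
  note T = assms(5) and bp = assms(12)
  have c: "c \<in> Hom C A M" using dist_homs[OF T] by blast
  have i1: "i1 \<in> Hom C M1 A" and p1: "p1 \<in> Hom C A M1" and i0: "i0 \<in> Hom C M0 A"
    and p1i0: "cmp C p1 i0 = zer C M0 M1"
    using bp unfolding biproduct_def by auto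
  have "cmp C c h = c" using assms(10) id_left[OF c] unfolding tri_morph_def by simp
  then have "cmp C c i0 = cmp C c (cmp C i1 (cmp C p1 i0))"
    using cmp_assoc[OF i0 assms(8) c] cmp_assoc[OF i0 p1 i1] assms(13) by simp
  then have ci0: "cmp C c i0 = zer C M0 M"
    using p1i0 cmp_zero_right[OF i1 hom_objL[OF i0]] cmp_zero_right[OF c hom_objL[OF i0]] by simp
  obtain M2 g1 k1 where T1: "(M1, M, M2, cmp C c i1, g1, k1) \<in> dist C"
    using dist_cone_exists[OF cmp_hom[OF i1 c]] by blast
  obtain \<alpha> \<beta> \<gamma> \<delta> where bpB: "biproduct C B M2 (shO C M0) \<beta> \<alpha> \<gamma> \<delta>"
    and g: "cmp C \<beta> g1 = g" and k: "k = add C (cmp C (shM C i1) (cmp C k1 \<alpha>)) (cmp C (shM C i0) \<delta>)"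
    using dist_cone_split_by_summand[OF T bp ci0 T1] by blast
  have "M1 \<in> w_le C Le m" and "M0 \<in> w_le C Le m"
    using weight_class_retract[OF assms(2,3)] biproduct_retracts[OF bp] assms(6)
    unfolding w_le_def by blast+
  moreover have "M2 \<in> w_ge C Ge (m + 1)" and M0_shift: "shO C M0 \<in> wshift C Ge (m + 1)"
    using weight_class_retract[OF assms(2,3)] biproduct_retracts[OF bpB] assms(7)
    unfolding w_ge_def by blast+
  moreover have "M0 \<in> w_ge C Ge m"
    using wshift_of_shift[OF M0_shift hom_objL[OF i0]] unfolding w_ge_def .
  moreover have "tri_iso C (A, M, B, c, g, k) (A, M, B, cmp C (cmp C c i1) p1, cmp C \<beta> g1,
      add C (cmp C (shM C i1) (cmp C k1 \<alpha>)) (cmp C (shM C i0) \<delta>)) (idm C A) (idm C M) (idm C B)"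
    using tri_iso_identity[OF T] biproduct_factor_through_first[OF bp c ci0] g k by simp
  ultimately show ?thesis unfolding w_eq_def using T1 bpB by blast
qed

end
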